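(* Let $p>2$ be prime, $u\in\mathbb{F}_p^*$ a non-square, $T'=\{\begin{pmatrix}a&bu\\ b&a\end{pmatrix}: a,b\in\mathbb{F}_p,\ a^2-ub^2\neq 0\}\subset {\rm GL}_2(\mathbb{F}_p)$, $Z$ the subgroup of scalar matrices, and $w=\begin{pmatrix}0&-1\\1&0\end{pmatrix}$. Then in the group ring $\mathbb{Q}[{\rm PGL}_2(\mathbb{F}_p)]$ the $T'$-trace element $\sum_{M\in T'/Z}M$ is equal to $${\rm id}+\sum_{r\in\mathbb{F}_p}\begin{pmatrix}1&r\\0&1\end{pmatrix}w\begin{pmatrix}1&r\\0&r^2-u\end{pmatrix}.$$
   Context: Matrices are viewed via their images in ${\rm PGL}_2(\mathbb{F}_p)={\rm GL}_2(\mathbb{F}_p)/Z$. *)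

theory Defs
  imports "HOL-Number_Theory.Number_Theory" "HOL-Library.Function_Algebras"
begin

text \<open>Elements of F_p are represented by integers in {0..<p}.
  A 2x2 matrix [[a,b],[c,d]] over F_p is the tuple (a,b,c,d).\<close>

type_synonym mat2 = "int \<times> int \<times> int \<times> int"

definition mat_of :: "int \<Rightarrow> int \<Rightarrow> int \<Rightarrow> int \<Rightarrow> int \<Rightarrow> mat2" where
  "mat_of p a b c d = (a mod p, b mod p, c mod p, d mod p)"

fun mat_mult :: "int \<Rightarrow> mat2 \<Rightarrow> mat2 \<Rightarrow> mat2" where
  "mat_mult p (a, b, c, d) (e, f, g, h) =
     mat_of p (a*e + b*g) (a*f + b*h) (c*e + d*g) (c*f + d*h)"

fun mat_smult :: "int \<Rightarrow> int \<Rightarrow> mat2 \<Rightarrow> mat2" where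
  "mat_smult p s (a, b, c, d) = mat_of p (s*a) (s*b) (s*c) (s*d)"

definition GL2 :: "int \<Rightarrow> mat2 set" where
  "GL2 p = {(a, b, c, d). a \<in> {0..<p} \<and> b \<in> {0..<p} \<and> c \<in> {0..<p} \<and> d \<in> {0..<p}
                          \<and> (a*d - b*c) mod p \<noteq> 0}"

definition pgl_class :: "int \<Rightarrow> mat2 \<Rightarrow> mat2 set" where
  "pgl_class p M = {N. \<exists>s\<in>{1..<p}. N = mat_smult p s M}"

definition PGL2 :: "int \<Rightarrow> mat2 set set" where
  "PGL2 p = pgl_class p ` GL2 p"

definition Tprime :: "int \<Rightarrow> int \<Rightarrow> mat2 set" where
  "Tprime p u = {mat_of p a (b*u) b a | a b. a \<in> {0..<p} \<and> b \<in> {0..<p} \<and> (a^2 - u*b^2) mod p \<noteq> 0}"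

text \<open>Group ring Q[G]: finitely supported functions G \<Rightarrow> Q (G finite here), with
  pointwise addition; a group element g is the basis element delta_g.\<close>
type_synonym 'g group_ring = "'g \<Rightarrow> rat"

definition gr_basis :: "'g \<Rightarrow> 'g group_ring" where
  "gr_basis g = (\<lambda>x. if x = g then 1 else 0)"

end

theory Submission
  imports Defs
begin

text \<open>Identify T' with the multiplicative group of F_p(sqrt u) via a + b sqrt u; then T'/Z is
  F_p(sqrt u)^* / F_p^*. Its elements are the class of 1 (b = 0) and, dividing by b otherwise,
  the classes of r + sqrt u = [[r, u], [1, r]] for r in F_p, and these p + 1 classes are pairwise
  distinct. The matrix product on the right-hand side is exactly [[r, u], [1, r]].\<close>

lemma cong_inverse_mod_prime:
  fixes p t :: int
  assumes "prime p" "\<not> p dvd t"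
  obtains t' where "[t * t' = 1] (mod p)"
  using assms cong_solve_coprime_int prime_imp_coprime coprime_commute by metis

lemma mat_smult_mat_of:
  "mat_smult p s (mat_of p a b c d) = mat_of p (s * a) (s * b) (s * c) (s * d)"
  by (simp add: mat_of_def mod_mult_right_eq)

lemma mat_of_cong:
  assumes "[a = a'] (mod p)" "[b = b'] (mod p)" "[c = c'] (mod p)" "[d = d'] (mod p)"
  shows "mat_of p a b c d = mat_of p a' b' c' d'"
  using assms by (simp add: mat_of_def cong_def)

lemma mat_mult_mat_of:
  "mat_mult p (mat_of p a b c d) (mat_of p e f g h)
     = mat_of p (a * e + b * g) (a * f + b * h) (c * e + d * g) (c * f + d * h)"
  unfolding mat_of_def[of p a b c d] mat_of_def[of p e f g h] mat_mult.simps
  by (intro mat_of_cong cong_add cong_mult; simp add: cong_def)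

lemma mat_smult_cong:
  assumes "[s = t] (mod p)"
  shows "mat_smult p s M = mat_smult p t M"
  using assms by (cases M) (auto intro: mat_of_cong cong_mult cong_refl)

lemma mat_smult_mat_smult:
  "mat_smult p s (mat_smult p t M) = mat_smult p (s * t) M"
  by (cases M) (simp add: mat_smult_mat_of mult.assoc)

lemma mat_smult_one_mat_of: "mat_smult p 1 (mat_of p a b c d) = mat_of p a b c d"
  by (simp add: mat_smult_mat_of)

lemma pgl_class_altdef:
  assumes "prime p"
  shows "pgl_class p M = {mat_smult p s M | s. \<not> p dvd s}"
proof -
  have "p > 0" using assms prime_gt_0_int by blast
  have "mat_smult p s M \<in> pgl_class p M" if "\<not> p dvd s" for s
  proof -
    have "s mod p \<noteq> 0" "0 \<le> s mod p" "s mod p < p"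
      using that \<open>p > 0\<close> by (simp_all add: dvd_eq_mod_eq_0)
    then have "s mod p \<in> {1..<p}" by simp
    moreover have "mat_smult p s M = mat_smult p (s mod p) M"
      by (rule mat_smult_cong) (simp add: cong_def)
    ultimately show ?thesis unfolding pgl_class_def by blast
  qed
  moreover have "\<not> p dvd s" if "s \<in> {1..<p}" for s
    using that zdvd_not_zless by auto
  ultimately show ?thesis unfolding pgl_class_def by blast
qed

lemma pgl_class_mat_smult:
  assumes "prime p" "\<not> p dvd t"
  shows "pgl_class p (mat_smult p t M) = pgl_class p M"
proof -
  obtain t' where t': "[t * t' = 1] (mod p)"
    using cong_inverse_mod_prime[OF assms] .
  have "\<not> p dvd t'"
    using assms(1) t' by (metis cong_dvd_iff dvd_mult not_prime_unit)
  have "[s = s * t' * t] (mod p)" for s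
    using cong_scalar_left[OF t', of s] by (simp add: cong_sym_eq ac_simps)
  then have "mat_smult p s M = mat_smult p (s * t') (mat_smult p t M)" for s
    unfolding mat_smult_mat_smult by (rule mat_smult_cong)
  moreover have "\<not> p dvd s * t'" "\<not> p dvd s * t" if "\<not> p dvd s" for s
    using that assms \<open>\<not> p dvd t'\<close> by (simp_all add: prime_dvd_mult_iff)
  ultimately show ?thesis
    unfolding pgl_class_altdef[OF assms(1)] mat_smult_mat_smult by blast
qed

lemma mat_of_in_pgl_class:
  assumes "prime p"
  shows "mat_of p a b c d \<in> pgl_class p (mat_of p a b c d)"
  using assms mat_smult_one_mat_of[of p a b c d, symmetric]
  by (auto simp: pgl_class_altdef not_prime_unit)

lemma pgl_class_eqD:
  assumes "prime p" "pgl_class p (mat_of p a b c d) = pgl_class p M"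
  obtains s where "\<not> p dvd s" "mat_of p a b c d = mat_smult p s M"
proof -
  have "mat_of p a b c d \<in> pgl_class p M"
    using mat_of_in_pgl_class[OF assms(1), of a b c d] assms(2) by simp
  then show ?thesis
    using that unfolding pgl_class_altdef[OF assms(1)] by blast
qed

lemma mat_mult_bruhat_normalized:
  "mat_mult p (mat_mult p (mat_of p 1 r 0 1) (mat_of p 0 (-1) 1 0)) (mat_of p 1 r 0 (r^2 - u))
     = mat_of p r u 1 r"
  by (simp add: mat_mult_mat_of power2_eq_square)

lemma pgl_class_scalar:
  assumes "prime p" "\<not> p dvd a"
  shows "pgl_class p (mat_of p a 0 0 a) = pgl_class p (mat_of p 1 0 0 1)"
  using pgl_class_mat_smult[OF assms, of "mat_of p 1 0 0 1"] by (simp add: mat_smult_mat_of)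

lemma pgl_class_Tprime_nonscalar:
  assumes "prime p" "\<not> p dvd b"
  obtains r where "r \<in> {0..<p}"
    and "pgl_class p (mat_of p a (b * u) b a) = pgl_class p (mat_of p r u 1 r)"
proof -
  obtain b' where b': "[b * b' = 1] (mod p)"
    using cong_inverse_mod_prime[OF assms] .
  define r where "r = a * b' mod p"
  have "r \<in> {0..<p}"
    unfolding r_def using assms(1) prime_gt_0_int by simp
  have "[b * r = a * (b * b')] (mod p)"
    unfolding r_def by (simp add: cong_def mod_mult_right_eq mult.left_commute)
  also have "[a * (b * b') = a] (mod p)"
    using cong_scalar_left[OF b', of a] by simp
  finally have "mat_of p a (b * u) b a = mat_smult p b (mat_of p r u 1 r)"
    unfolding mat_smult_mat_of by (intro mat_of_cong) (simp_all add: cong_sym mult.commute)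
  then show ?thesis
    using that \<open>r \<in> {0..<p}\<close> pgl_class_mat_smult[OF assms] by metis
qed

lemma one_mat_in_Tprime:
  assumes "p > 1"
  shows "mat_of p 1 0 0 1 \<in> Tprime p u"
proof -
  have "mat_of p 1 0 0 1 = mat_of p 1 (0 * u) 0 1" by simp
  then show ?thesis
    using assms unfolding Tprime_def by fastforce
qed

lemma normalized_in_Tprime:
  assumes "p > 1" "\<not> QuadRes p u" "r \<in> {0..<p}"
  shows "mat_of p r u 1 r \<in> Tprime p u"
proof -
  have "(r^2 - u * 1^2) mod p \<noteq> 0"
    using assms(2) by (auto simp: QuadRes_def cong_iff_dvd_diff dvd_eq_mod_eq_0)
  moreover have "mat_of p r u 1 r = mat_of p r (1 * u) 1 r" by simp
  ultimately show ?thesis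
    using assms unfolding Tprime_def by fastforce
qed

lemma pgl_class_image_Tprime:
  assumes "prime p" "\<not> QuadRes p u"
  shows "pgl_class p ` Tprime p u
           = insert (pgl_class p (mat_of p 1 0 0 1))
               ((\<lambda>r. pgl_class p (mat_of p r u 1 r)) ` {0..<p})"
    (is "_ = insert ?I (?C ` _)")
proof
  show "pgl_class p ` Tprime p u \<subseteq> insert ?I (?C ` {0..<p})"
  proof
    fix X assume "X \<in> pgl_class p ` Tprime p u"
    then obtain a b where ab: "b \<in> {0..<p}" "(a^2 - u * b^2) mod p \<noteq> 0"
      and X: "X = pgl_class p (mat_of p a (b * u) b a)"
      unfolding Tprime_def by blast
    show "X \<in> insert ?I (?C ` {0..<p})"
    proof (cases "b = 0")
      case True
      then have "\<not> p dvd a^2"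
        using ab(2) by (simp add: dvd_eq_mod_eq_0)
      then have "\<not> p dvd a"
        by (metis dvd_mult2 power2_eq_square)
      then show ?thesis
        using X True pgl_class_scalar[OF assms(1)] by simp
    next
      case False
      then have "\<not> p dvd b"
        using ab(1) zdvd_not_zless by auto
      then obtain r where "r \<in> {0..<p}" "X = ?C r"
        using X pgl_class_Tprime_nonscalar[OF assms(1)] by metis
      then show ?thesis by blast
    qed
  qed
  have "p > 1" using assms(1) prime_gt_1_int by blast
  then show "insert ?I (?C ` {0..<p}) \<subseteq> pgl_class p ` Tprime p u"
    using one_mat_in_Tprime normalized_in_Tprime[OF _ assms(2)] by blast
qed

lemma pgl_class_one_ne_normalized:
  assumes "prime p"
  shows "pgl_class p (mat_of p 1 0 0 1) \<noteq> pgl_class p (mat_of p r u 1 r)"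
proof
  assume "pgl_class p (mat_of p 1 0 0 1) = pgl_class p (mat_of p r u 1 r)"
  then obtain s where "\<not> p dvd s" "mat_of p 1 0 0 1 = mat_smult p s (mat_of p r u 1 r)"
    using pgl_class_eqD[OF assms] by blast
  then show False
    unfolding mat_smult_mat_of by (simp add: mat_of_def dvd_eq_mod_eq_0)
qed

lemma inj_on_pgl_class_normalized:
  assumes "prime p"
  shows "inj_on (\<lambda>r. pgl_class p (mat_of p r u 1 r)) {0..<p}"
proof
  fix r r' assume r: "r \<in> {0..<p}" "r' \<in> {0..<p}"
    and "pgl_class p (mat_of p r u 1 r) = pgl_class p (mat_of p r' u 1 r')"
  then obtain s where "mat_of p r u 1 r = mat_smult p s (mat_of p r' u 1 r')"
    using pgl_class_eqD[OF assms] by blast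
  then have "s mod p = 1 mod p" "r mod p = s * r' mod p"
    unfolding mat_smult_mat_of by (simp_all add: mat_of_def)
  then have "r mod p = r' mod p"
    by (metis mod_mult_left_eq mult_1)
  then show "r = r'"
    using r by simp
qed

theorem proposition2p2:
  fixes p u :: int
  assumes "prime p" and "p > 2"
    and "u \<in> {1..<p}" and "\<not> QuadRes p u"
  shows "(\<Sum>C \<in> pgl_class p ` Tprime p u. gr_basis C)
       = gr_basis (pgl_class p (mat_of p 1 0 0 1))
         + (\<Sum>r\<in>{0..<p}. gr_basis (pgl_class p
              (mat_mult p (mat_mult p (mat_of p 1 r 0 1) (mat_of p 0 (-1) 1 0))
                          (mat_of p 1 r 0 (r^2 - u)))))"
proof -
  have "(\<Sum>C \<in> pgl_class p ` Tprime p u. gr_basis C)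
      = gr_basis (pgl_class p (mat_of p 1 0 0 1))
        + (\<Sum>r\<in>{0..<p}. gr_basis (pgl_class p (mat_of p r u 1 r)))"
    unfolding pgl_class_image_Tprime[OF assms(1,4)]
    using pgl_class_one_ne_normalized[OF assms(1), of _ u]
      inj_on_pgl_class_normalized[OF assms(1), of u]
    by (subst sum.insert) (auto simp: sum.reindex)
  then show ?thesis
    by (simp only: mat_mult_bruhat_normalized)
qed

end
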